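(* For an integer $R\ge 2$ and $n\ge1$, let $\ket{\psi_R^n}=c\sum_{k=0}^{R-1}R_y\!\big(\tfrac{2\pi k}{R}\big)^{\otimes n}\ket{0}^{\otimes n}$, where $c>0$ is the normalization constant (defined whenever the sum is nonzero, which holds for all sufficiently large $n$). Then $\lim_{n\to\infty}\mathcal{C}(\ket{\psi_R^n})=\frac{R-1}{R}$, and there exists $n_0$ such that $\mathrm{rk}(\ket{\psi_R^n})=R$ for all $n\ge n_0$.
   Context: $R_y(\theta)=\exp(-i\theta\sigma_y/2)$ is the single-qubit rotation with $R_y(\theta)\ket{0}=\cos(\theta/2)\ket{0}+\sin(\theta/2)\ket{1}$. The CP rank $\mathrm{rk}(\ket{\psi})$ is the minimal $r$ with $\ket{\psi}=\sum_{i=1}^r c_i\bigotimes_{j=1}^n\ket{\phi_i^{(j)}}$. The concentratable entanglement is $\mathcal{C}(\ket{\psi})=1-\frac{1}{2^{n}}\sum_{\alpha\subseteq [n]}\mathrm{Tr}[\rho_\alpha^2]$, with $\rho_\alpha$ the reduced state on $\alpha$ and $\mathrm{Tr}[\rho_\emptyset^2]=1$. *)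

theory Defs
  imports "HOL-Analysis.Analysis"
begin

text \<open>An n-qubit state is represented by its amplitude function on the computational
  basis. A basis vector |x_0 ... x_{n-1}> is encoded by the set of qubit positions
  j < n with x_j = 1, i.e. by a subset of {..<n}. Values outside Pow {..<n} are ignored.\<close>

type_synonym qstate = "nat set \<Rightarrow> complex"

text \<open>Amplitudes of R_y(theta)|0> = cos(theta/2)|0> + sin(theta/2)|1>; True means |1>.\<close>
definition Ry0 :: "real \<Rightarrow> bool \<Rightarrow> real" where
  "Ry0 \<theta> b = (if b then sin (\<theta> / 2) else cos (\<theta> / 2))"

definition psi_unnorm :: "nat \<Rightarrow> nat \<Rightarrow> nat set \<Rightarrow> real" where
  "psi_unnorm R n x = (\<Sum>k<R. \<Prod>j<n. Ry0 (2 * pi * real k / real R) (j \<in> x))"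

definition norm_const :: "nat \<Rightarrow> nat \<Rightarrow> real" where
  "norm_const R n = 1 / sqrt (\<Sum>x\<in>Pow {..<n}. (psi_unnorm R n x)\<^sup>2)"

definition psiR :: "nat \<Rightarrow> nat \<Rightarrow> qstate" where
  "psiR R n x = complex_of_real (norm_const R n * psi_unnorm R n x)"

definition reduced_dm :: "nat \<Rightarrow> qstate \<Rightarrow> nat set \<Rightarrow> nat set \<Rightarrow> nat set \<Rightarrow> complex" where
  "reduced_dm n \<psi> \<alpha> a a' = (\<Sum>b\<in>Pow ({..<n} - \<alpha>). \<psi> (a \<union> b) * cnj (\<psi> (a' \<union> b)))"

definition purity :: "nat \<Rightarrow> qstate \<Rightarrow> nat set \<Rightarrow> complex" where
  "purity n \<psi> \<alpha> = (if \<alpha> = {} then 1 else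
     (\<Sum>a\<in>Pow \<alpha>. \<Sum>a'\<in>Pow \<alpha>. reduced_dm n \<psi> \<alpha> a a' * reduced_dm n \<psi> \<alpha> a' a))"

definition conc_ent :: "nat \<Rightarrow> qstate \<Rightarrow> real" where
  "conc_ent n \<psi> = 1 - (1 / 2 ^ n) * Re (\<Sum>\<alpha>\<in>Pow {..<n}. purity n \<psi> \<alpha>)"

definition has_cp_decomp :: "nat \<Rightarrow> qstate \<Rightarrow> nat \<Rightarrow> bool" where
  "has_cp_decomp n \<psi> r \<longleftrightarrow>
     (\<exists>c :: nat \<Rightarrow> complex. \<exists>\<phi> :: nat \<Rightarrow> nat \<Rightarrow> bool \<Rightarrow> complex.
        \<forall>x\<in>Pow {..<n}. \<psi> x = (\<Sum>i<r. c i * (\<Prod>j<n. \<phi> i j (j \<in> x))))"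

definition cp_rank :: "nat \<Rightarrow> qstate \<Rightarrow> nat" where
  "cp_rank n \<psi> = (LEAST r. has_cp_decomp n \<psi> r)"

end

theory Submission
  imports Defs "Jordan_Normal_Form.Determinant"
begin

(*
  With v_k = R_y(2 pi k/R)|0> = (cos(pi k/R), sin(pi k/R)) the state is c * sum_k v_k^(tensor n),
  so every purity is a polynomial in the Gram entries g(k,l) = <v_k, v_l> = cos(pi (k - l)/R):
  the squared norm is sum_{k,l} g(k,l)^n and sum_alpha Tr[rho_alpha^2] equals
  c^4 sum_{k,k',l,l'} (g(k,l') g(l,k') + g(k,l) g(k',l'))^n. Since |g(k,l)| < 1 off the diagonal,
  only the R diagonal terms survive as n grows, and C tends to 1 - R/R^2.

  For the rank, pairing a qubit with the functional (1, +-i) sends v_k to exp(+-i pi k/R). Taking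
  s plus signs among the first R qubits and t among the next R turns the state into the Hankel
  matrix sum_k d_k zeta_k^(s+t), zeta_k the R-th roots of unity and d_k /= 0. The discrete Fourier
  transform diagonalises it, whereas a CP decomposition with r terms factors it through C^r.
*)

lemma sum_Pow_prod_bool:
  fixes f :: "'a \<Rightarrow> bool \<Rightarrow> 'b :: comm_semiring_1"
  assumes "finite I"
  shows "(\<Sum>x\<in>Pow I. \<Prod>j\<in>I. f j (j \<in> x)) = (\<Prod>j\<in>I. f j False + f j True)"
proof -
  have "(\<Prod>j\<in>I. f j False + f j True) = (\<Sum>X\<in>Pow I. (\<Prod>j\<in>X. f j True) * (\<Prod>j\<in>I - X. f j False))"
    using prod_add[OF assms, of "\<lambda>j. f j True" "\<lambda>j. f j False"] by (simp add: add.commute)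
  also have "\<dots> = (\<Sum>x\<in>Pow I. \<Prod>j\<in>I. f j (j \<in> x))"
  proof (rule sum.cong)
    fix X assume "X \<in> Pow I"
    then have "I \<inter> {j. j \<in> X} = X" "I \<inter> - {j. j \<in> X} = I - X" by auto
    moreover have "(\<Prod>j\<in>I. f j (j \<in> X)) = (\<Prod>j\<in>I. if j \<in> X then f j True else f j False)"
      by (rule prod.cong) auto
    ultimately show "(\<Prod>j\<in>X. f j True) * (\<Prod>j\<in>I - X. f j False) = (\<Prod>j\<in>I. f j (j \<in> X))"
      using prod.If_cases[OF assms, of "\<lambda>j. j \<in> X" "\<lambda>j. f j True" "\<lambda>j. f j False"] by simp
  qed simp
  finally show ?thesis by simp
qed

lemma sum_Pow_subset_prod_bool:
  fixes f :: "'a \<Rightarrow> bool \<Rightarrow> 'b :: comm_semiring_1"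
  assumes "finite I" and "J \<subseteq> I"
  shows "(\<Sum>b\<in>Pow J. \<Prod>j\<in>I. f j (j \<in> b)) =
         (\<Prod>j\<in>I. if j \<in> J then f j False + f j True else f j False)"
proof -
  have "finite J" using assms finite_subset by blast
  have split: "prod g I = prod g J * prod g (I - J)" for g :: "'a \<Rightarrow> 'b"
    using assms by (metis prod.subset_diff mult.commute)
  have "(\<Sum>b\<in>Pow J. \<Prod>j\<in>I. f j (j \<in> b)) =
        (\<Sum>b\<in>Pow J. (\<Prod>j\<in>J. f j (j \<in> b)) * (\<Prod>j\<in>I - J. f j False))"
  proof (rule sum.cong)
    fix b assume "b \<in> Pow J"
    then have "\<forall>j\<in>I - J. j \<notin> b" by auto
    then have "(\<Prod>j\<in>I - J. f j (j \<in> b)) = (\<Prod>j\<in>I - J. f j False)"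
      by (intro prod.cong) auto
    then show "(\<Prod>j\<in>I. f j (j \<in> b)) = (\<Prod>j\<in>J. f j (j \<in> b)) * (\<Prod>j\<in>I - J. f j False)"
      by (simp add: split)
  qed simp
  also have "\<dots> = (\<Prod>j\<in>J. f j False + f j True) * (\<Prod>j\<in>I - J. f j False)"
    by (simp add: sum_Pow_prod_bool[OF \<open>finite J\<close>] flip: sum_distrib_right)
  also have "\<dots> = (\<Prod>j\<in>I. if j \<in> J then f j False + f j True else f j False)"
    unfolding split[of "\<lambda>j. if j \<in> J then f j False + f j True else f j False"]
    by (intro arg_cong2[where f = "(*)"] prod.cong) auto
  finally show ?thesis .
qed

lemma sum_Pow_Pow_prod_bool:
  fixes g :: "'a \<Rightarrow> bool \<Rightarrow> bool \<Rightarrow> 'b :: comm_semiring_1"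
  assumes "finite I" and "J \<subseteq> I"
  shows "(\<Sum>a\<in>Pow J. \<Sum>a'\<in>Pow J. \<Prod>j\<in>I. g j (j \<in> a) (j \<in> a')) =
         (\<Prod>j\<in>I. if j \<in> J then g j False False + g j False True + g j True False + g j True True
                  else g j False False)"
proof -
  have "(\<Sum>a'\<in>Pow J. \<Prod>j\<in>I. g j (j \<in> a) (j \<in> a')) =
        (\<Prod>j\<in>I. if j \<in> J then g j (j \<in> a) False + g j (j \<in> a) True else g j (j \<in> a) False)"
    for a by (rule sum_Pow_subset_prod_bool[OF assms])
  then show ?thesis
    by (simp add: sum_Pow_subset_prod_bool[OF assms, of "\<lambda>j \<beta>. if j \<in> J then g j \<beta> False + g j \<beta> True else g j \<beta> False"]
                  add_ac cong: if_cong)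
qed

section \<open>Concentratable entanglement\<close>

definition gram :: "(nat \<Rightarrow> bool \<Rightarrow> real) \<Rightarrow> nat \<Rightarrow> nat \<Rightarrow> real" where
  "gram v k l = v k False * v l False + v k True * v l True"

definition tensor_power_sum :: "(nat \<Rightarrow> bool \<Rightarrow> real) \<Rightarrow> nat \<Rightarrow> nat \<Rightarrow> nat set \<Rightarrow> real" where
  "tensor_power_sum v R n x = (\<Sum>k<R. \<Prod>j<n. v k (j \<in> x))"

lemma reduced_dm_of_real:
  "reduced_dm n (\<lambda>x. of_real (f x)) \<alpha> a a' = of_real (\<Sum>b\<in>Pow ({..<n} - \<alpha>). f (a \<union> b) * f (a' \<union> b))"
  by (simp add: reduced_dm_def)

lemma reduced_dm_tensor_power_sum:
  assumes "\<alpha> \<subseteq> {..<n}" and "a \<subseteq> \<alpha>" and "a' \<subseteq> \<alpha>"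
  shows "reduced_dm n (\<lambda>x. of_real (tensor_power_sum v R n x)) \<alpha> a a' =
         of_real (\<Sum>k<R. \<Sum>l<R. \<Prod>j<n. if j \<in> \<alpha> then v k (j \<in> a) * v l (j \<in> a') else gram v k l)"
proof -
  define h where "h k l j \<beta> = (if j \<in> \<alpha> then v k (j \<in> a) * v l (j \<in> a') else v k \<beta> * v l \<beta>)"
    for k l j \<beta>
  have "tensor_power_sum v R n (a \<union> b) * tensor_power_sum v R n (a' \<union> b) =
        (\<Sum>k<R. \<Sum>l<R. \<Prod>j<n. h k l j (j \<in> b))" if "b \<in> Pow ({..<n} - \<alpha>)" for b
  proof -
    have "v k (j \<in> a \<union> b) * v l (j \<in> a' \<union> b) = h k l j (j \<in> b)" for k l j
    proof -
      have "(j \<in> a \<union> b) = (if j \<in> \<alpha> then j \<in> a else j \<in> b)"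
           "(j \<in> a' \<union> b) = (if j \<in> \<alpha> then j \<in> a' else j \<in> b)"
        using that assms by auto
      then show ?thesis by (simp add: h_def)
    qed
    then show ?thesis
      by (simp add: tensor_power_sum_def sum_product prod.distrib[symmetric])
  qed
  then have "(\<Sum>b\<in>Pow ({..<n} - \<alpha>). tensor_power_sum v R n (a \<union> b) * tensor_power_sum v R n (a' \<union> b)) =
        (\<Sum>k<R. \<Sum>l<R. \<Sum>b\<in>Pow ({..<n} - \<alpha>). \<Prod>j<n. h k l j (j \<in> b))"
    by (simp add: sum.swap[of _ "Pow _"])
  also have "\<dots> = (\<Sum>k<R. \<Sum>l<R. \<Prod>j<n. if j \<in> \<alpha> then v k (j \<in> a) * v l (j \<in> a') else gram v k l)"
    by (simp add: sum_Pow_subset_prod_bool) (intro sum.cong prod.cong refl; auto simp: h_def gram_def)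
  finally show ?thesis
    by (simp only: reduced_dm_of_real)
qed

lemma sum_sq_tensor_power_sum:
  "(\<Sum>x\<in>Pow {..<n}. (tensor_power_sum v R n x)\<^sup>2) = (\<Sum>k<R. \<Sum>l<R. gram v k l ^ n)"
  using reduced_dm_tensor_power_sum[of "{}" n "{}" "{}" v R]
  unfolding reduced_dm_of_real of_real_eq_iff by (simp add: power2_eq_square)

lemma sum_reduced_dm_products_tensor_power_sum:
  fixes v :: "nat \<Rightarrow> bool \<Rightarrow> real" and R n :: nat
  assumes "\<alpha> \<subseteq> {..<n}"
  defines "\<rho> \<equiv> reduced_dm n (\<lambda>x. of_real (tensor_power_sum v R n x)) \<alpha>"
  shows "(\<Sum>a\<in>Pow \<alpha>. \<Sum>a'\<in>Pow \<alpha>. \<rho> a a' * \<rho> a' a) =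
         of_real (\<Sum>k<R. \<Sum>k'<R. \<Sum>l<R. \<Sum>l'<R.
           \<Prod>j<n. if j \<in> \<alpha> then gram v k l' * gram v l k' else gram v k l * gram v k' l')"
proof -
  define g where "g k l k' l' j \<beta> \<beta>' =
    (if j \<in> \<alpha> then (v k \<beta> * v l' \<beta>) * (v l \<beta>' * v k' \<beta>') else gram v k l * gram v k' l')"
    for k l k' l' j \<beta> \<beta>'
  have "\<rho> a a' * \<rho> a' a = of_real (\<Sum>k<R. \<Sum>k'<R. \<Sum>l<R. \<Sum>l'<R. \<Prod>j<n. g k l k' l' j (j \<in> a) (j \<in> a'))"
    if "a \<subseteq> \<alpha>" "a' \<subseteq> \<alpha>" for a a'
    unfolding \<rho>_def reduced_dm_tensor_power_sum[OF assms(1) that] reduced_dm_tensor_power_sum[OF assms(1) that(2,1)]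
      of_real_mult[symmetric]
    unfolding sum_product prod.distrib[symmetric]
    by (intro arg_cong[where f = of_real] sum.cong prod.cong refl) (simp add: g_def mult_ac)
  then have "(\<Sum>a\<in>Pow \<alpha>. \<Sum>a'\<in>Pow \<alpha>. \<rho> a a' * \<rho> a' a) =
      of_real (\<Sum>k<R. \<Sum>k'<R. \<Sum>l<R. \<Sum>l'<R. \<Sum>a\<in>Pow \<alpha>. \<Sum>a'\<in>Pow \<alpha>. \<Prod>j<n. g k l k' l' j (j \<in> a) (j \<in> a'))"
    by (simp add: sum.swap[where A = "Pow \<alpha>" and B = "{..<R}"] flip: of_real_sum)
  also have "\<dots> = of_real (\<Sum>k<R. \<Sum>k'<R. \<Sum>l<R. \<Sum>l'<R.
           \<Prod>j<n. if j \<in> \<alpha> then gram v k l' * gram v l k' else gram v k l * gram v k' l')"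
    using assms
    by (simp add: sum_Pow_Pow_prod_bool)
       (intro sum.cong prod.cong refl; simp add: g_def gram_def algebra_simps)
  finally show ?thesis .
qed

lemma reduced_dm_scale:
  "reduced_dm n (\<lambda>x. of_real (c * f x)) \<alpha> a a' = of_real (c\<^sup>2) * reduced_dm n (\<lambda>x. of_real (f x)) \<alpha> a a'"
  unfolding reduced_dm_of_real by (simp add: sum_distrib_left power2_eq_square mult_ac)

lemma purity_tensor_power_sum:
  fixes v :: "nat \<Rightarrow> bool \<Rightarrow> real"
  assumes norm: "c\<^sup>2 * (\<Sum>k<R. \<Sum>l<R. gram v k l ^ n) = 1" and "\<alpha> \<subseteq> {..<n}"
  shows "purity n (\<lambda>x. of_real (c * tensor_power_sum v R n x)) \<alpha> =
         of_real (c ^ 4 * (\<Sum>k<R. \<Sum>k'<R. \<Sum>l<R. \<Sum>l'<R.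
           \<Prod>j<n. if j \<in> \<alpha> then gram v k l' * gram v l k' else gram v k l * gram v k' l'))"
proof (cases "\<alpha> = {}")
  case True
  have "reduced_dm n (\<lambda>x. of_real (tensor_power_sum v R n x)) {} {} {} = of_real (\<Sum>k<R. \<Sum>l<R. gram v k l ^ n)"
    by (simp add: reduced_dm_of_real sum_sq_tensor_power_sum flip: power2_eq_square)
  then have "of_real (c ^ 4 * (\<Sum>k<R. \<Sum>k'<R. \<Sum>l<R. \<Sum>l'<R. \<Prod>j<n. gram v k l * gram v k' l')) =
             (of_real (c\<^sup>2 * (\<Sum>k<R. \<Sum>l<R. gram v k l ^ n)) :: complex)\<^sup>2"
    using sum_reduced_dm_products_tensor_power_sum[of "{}" n v R]
    by (simp add: power2_eq_square power4_eq_xxxx mult_ac)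
  then show ?thesis
    using True norm by (simp add: purity_def)
next
  case False
  let ?\<rho> = "reduced_dm n (\<lambda>x. of_real (tensor_power_sum v R n x)) \<alpha>"
  have "purity n (\<lambda>x. of_real (c * tensor_power_sum v R n x)) \<alpha> =
        of_real (c ^ 4) * (\<Sum>a\<in>Pow \<alpha>. \<Sum>a'\<in>Pow \<alpha>. ?\<rho> a a' * ?\<rho> a' a)"
    using False unfolding purity_def reduced_dm_scale
    by (simp add: sum_distrib_left power4_eq_xxxx power2_eq_square mult_ac)
  then show ?thesis
    using sum_reduced_dm_products_tensor_power_sum[OF assms(2), of v R] by (simp only: of_real_mult)
qed

lemma conc_ent_tensor_power_sum:
  fixes v :: "nat \<Rightarrow> bool \<Rightarrow> real"
  assumes "c\<^sup>2 * (\<Sum>k<R. \<Sum>l<R. gram v k l ^ n) = 1"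
  shows "conc_ent n (\<lambda>x. of_real (c * tensor_power_sum v R n x)) =
         1 - c ^ 4 * (\<Sum>k<R. \<Sum>k'<R. \<Sum>l<R. \<Sum>l'<R.
           ((gram v k l' * gram v l k' + gram v k l * gram v k' l') / 2) ^ n)"
proof -
  have sum_Pow_if: "(\<Sum>\<alpha>\<in>Pow {..<n}. \<Prod>j<n. if j \<in> \<alpha> then p else q) = (p + q) ^ n" for p q :: real
    using sum_Pow_prod_bool[of "{..<n}" "\<lambda>j \<beta>. if \<beta> then p else q"] by (simp add: add.commute)
  have "(\<Sum>\<alpha>\<in>Pow {..<n}. purity n (\<lambda>x. of_real (c * tensor_power_sum v R n x)) \<alpha>) =
        (\<Sum>\<alpha>\<in>Pow {..<n}. of_real (c ^ 4 * (\<Sum>k<R. \<Sum>k'<R. \<Sum>l<R. \<Sum>l'<R.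
          \<Prod>j<n. if j \<in> \<alpha> then gram v k l' * gram v l k' else gram v k l * gram v k' l')))"
    by (rule sum.cong[OF refl], rule purity_tensor_power_sum[OF assms]) blast
  also have "\<dots> = of_real (c ^ 4 * (\<Sum>k<R. \<Sum>k'<R. \<Sum>l<R. \<Sum>l'<R. \<Sum>\<alpha>\<in>Pow {..<n}.
          \<Prod>j<n. if j \<in> \<alpha> then gram v k l' * gram v l k' else gram v k l * gram v k' l'))"
    by (simp only: of_real_sum sum_distrib_left sum.swap[where A = "Pow {..<n}" and B = "{..<R}"])
  also have "\<dots> = of_real (c ^ 4 * (\<Sum>k<R. \<Sum>k'<R. \<Sum>l<R. \<Sum>l'<R.
          (gram v k l' * gram v l k' + gram v k l * gram v k' l') ^ n))"
    by (simp only: sum_Pow_if)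
  finally have "Re (\<Sum>\<alpha>\<in>Pow {..<n}. purity n (\<lambda>x. of_real (c * tensor_power_sum v R n x)) \<alpha>) =
      c ^ 4 * (\<Sum>k<R. \<Sum>k'<R. \<Sum>l<R. \<Sum>l'<R. (gram v k l' * gram v l k' + gram v k l * gram v k' l') ^ n)"
    by (simp only: Re_complex_of_real)
  moreover have "(\<Sum>k<R. \<Sum>k'<R. \<Sum>l<R. \<Sum>l'<R. (gram v k l' * gram v l k' + gram v k l * gram v k' l') ^ n) / 2 ^ n =
      (\<Sum>k<R. \<Sum>k'<R. \<Sum>l<R. \<Sum>l'<R. ((gram v k l' * gram v l k' + gram v k l * gram v k' l') / 2) ^ n)"
    by (simp add: power_divide sum_divide_distrib)
  ultimately show ?thesis
    unfolding conc_ent_def by (metis (no_types, lifting) mult.left_commute times_divide_eq_left mult_1)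
qed

lemma tendsto_sum_power_entries:
  fixes g :: "nat \<Rightarrow> nat \<Rightarrow> real"
  assumes "\<And>k. k < R \<Longrightarrow> g k k = 1" and "\<And>k l. k < R \<Longrightarrow> l < R \<Longrightarrow> k \<noteq> l \<Longrightarrow> \<bar>g k l\<bar> < 1"
  shows "(\<lambda>n. \<Sum>k<R. \<Sum>l<R. g k l ^ n) \<longlonglongrightarrow> real R"
proof -
  have "(\<lambda>n. g k l ^ n) \<longlonglongrightarrow> of_bool (l = k)" if "k < R" "l < R" for k l
    using that assms by (cases "l = k") (simp_all add: LIMSEQ_abs_realpow_zero2)
  then have "(\<lambda>n. \<Sum>k<R. \<Sum>l<R. g k l ^ n) \<longlonglongrightarrow> (\<Sum>k<R. \<Sum>l<R. of_bool (l = k))"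
    by (intro tendsto_sum) auto
  then show ?thesis by simp
qed

lemma abs_mean_products_less_one:
  fixes g :: "nat \<Rightarrow> nat \<Rightarrow> real"
  assumes diag: "\<And>k. k < R \<Longrightarrow> g k k = 1"
    and off_diag: "\<And>k l. k < R \<Longrightarrow> l < R \<Longrightarrow> k \<noteq> l \<Longrightarrow> \<bar>g k l\<bar> < 1"
    and "k < R" "k' < R" "l < R" "l' < R" and "\<not> (k' = k \<and> l = k \<and> l' = k)"
  shows "\<bar>(g k l' * g l k' + g k l * g k' l') / 2\<bar> < 1"
proof -
  have le: "\<bar>g a b\<bar> \<le> 1" if "a < R" "b < R" for a b
    using that diag off_diag by (cases "a = b") (auto simp: less_imp_le)
  have mult_less: "\<bar>x * y\<bar> < 1" if "\<bar>x\<bar> < 1 \<and> \<bar>y\<bar> \<le> 1 \<or> \<bar>x\<bar> \<le> 1 \<and> \<bar>y\<bar> < 1" for x y :: real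
    using that mult_left_le[of "\<bar>y\<bar>" "\<bar>x\<bar>"] mult_left_le_one_le[of "\<bar>y\<bar>" "\<bar>x\<bar>"]
    by (auto simp: abs_mult)
  have mult_le: "\<bar>x * y\<bar> \<le> 1" if "\<bar>x\<bar> \<le> 1" "\<bar>y\<bar> \<le> 1" for x y :: real
    using that by (simp add: abs_mult mult_le_one)
  have "\<bar>g k l'\<bar> < 1 \<or> \<bar>g l k'\<bar> < 1 \<or> \<bar>g k l\<bar> < 1"
    using assms(3-) off_diag[of k l'] off_diag[of l k'] off_diag[of k l] by auto
  then have "\<bar>g k l' * g l k'\<bar> < 1 \<or> \<bar>g k l * g k' l'\<bar> < 1"
    using assms(3-6) le mult_less by meson
  moreover have "\<bar>g k l' * g l k'\<bar> \<le> 1" "\<bar>g k l * g k' l'\<bar> \<le> 1"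
    using assms(3-6) le mult_le by auto
  ultimately have "\<bar>g k l' * g l k' + g k l * g k' l'\<bar> < 2"
    using abs_triangle_ineq[of "g k l' * g l k'" "g k l * g k' l'"] by linarith
  then show ?thesis
    by simp
qed

lemma tendsto_sum_power_mean_products:
  fixes g :: "nat \<Rightarrow> nat \<Rightarrow> real"
  assumes diag: "\<And>k. k < R \<Longrightarrow> g k k = 1"
    and off_diag: "\<And>k l. k < R \<Longrightarrow> l < R \<Longrightarrow> k \<noteq> l \<Longrightarrow> \<bar>g k l\<bar> < 1"
  shows "(\<lambda>n. \<Sum>k<R. \<Sum>k'<R. \<Sum>l<R. \<Sum>l'<R. ((g k l' * g l k' + g k l * g k' l') / 2) ^ n)
           \<longlonglongrightarrow> real R"
proof -
  have "(\<lambda>n. ((g k l' * g l k' + g k l * g k' l') / 2) ^ n) \<longlonglongrightarrow>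
          of_bool (k' = k \<and> l = k \<and> l' = k)"
    if "k < R" "k' < R" "l < R" "l' < R" for k k' l l'
  proof (cases "k' = k \<and> l = k \<and> l' = k")
    case True
    then show ?thesis using that diag by simp
  next
    case False
    then have "\<bar>(g k l' * g l k' + g k l * g k' l') / 2\<bar> < 1"
      using that by (intro abs_mean_products_less_one[OF diag off_diag])
    moreover have "of_bool (k' = k \<and> l = k \<and> l' = k) = (0 :: real)"
      using False by simp
    ultimately show ?thesis
      using LIMSEQ_abs_realpow_zero2 by (simp only:)
  qed
  then have "(\<lambda>n. \<Sum>k<R. \<Sum>k'<R. \<Sum>l<R. \<Sum>l'<R. ((g k l' * g l k' + g k l * g k' l') / 2) ^ n)
      \<longlonglongrightarrow> (\<Sum>k<R. \<Sum>k'<R. \<Sum>l<R. \<Sum>l'<R. of_bool (k' = k \<and> l = k \<and> l' = k))"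
    by (intro tendsto_sum) auto
  moreover have "(\<Sum>k<R. \<Sum>k'<R. \<Sum>l<R. \<Sum>l'<R. of_bool (k' = k \<and> l = k \<and> l' = k)) = real R"
    by (simp add: of_bool_conj sum.delta' flip: sum_distrib_left sum_distrib_right)
  ultimately show ?thesis
    by (simp only:)
qed

lemma abs_cos_less_one:
  fixes x :: real
  assumes "0 < \<bar>x\<bar>" and "\<bar>x\<bar> < pi"
  shows "\<bar>cos x\<bar> < 1"
proof -
  have "0 < sin \<bar>x\<bar>"
    using assms by (intro sin_gt_zero)
  then have "0 < (sin x)\<^sup>2"
    by (cases "0 \<le> x") auto
  then have "(cos x)\<^sup>2 < 1"
    using sin_cos_squared_add[of x] by linarith
  then show ?thesis
    by (simp add: abs_square_less_1)
qed

definition ry_qubit :: "nat \<Rightarrow> nat \<Rightarrow> bool \<Rightarrow> real" where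
  "ry_qubit R k = Ry0 (2 * pi * real k / real R)"

lemma psi_unnorm_eq_tensor_power_sum: "psi_unnorm R n = tensor_power_sum (ry_qubit R) R n"
  by (simp add: fun_eq_iff psi_unnorm_def tensor_power_sum_def ry_qubit_def)

lemma gram_ry_qubit: "gram (ry_qubit R) k l = cos (pi * (real k - real l) / real R)"
  by (simp add: gram_def ry_qubit_def Ry0_def cos_diff diff_divide_distrib right_diff_distrib)

lemma gram_ry_qubit_self: "gram (ry_qubit R) k k = 1"
  by (simp add: gram_ry_qubit)

lemma abs_gram_ry_qubit_less_one:
  assumes "k < R" and "l < R" and "k \<noteq> l"
  shows "\<bar>gram (ry_qubit R) k l\<bar> < 1"
proof -
  define t where "t = \<bar>real k - real l\<bar> / real R"
  have "0 < t" "t < 1"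
    using assms by (auto simp: t_def)
  moreover have "\<bar>pi * (real k - real l) / real R\<bar> = pi * t"
    by (simp add: t_def abs_mult abs_divide)
  ultimately have "0 < \<bar>pi * (real k - real l) / real R\<bar>" "\<bar>pi * (real k - real l) / real R\<bar> < pi"
    by simp_all
  then show ?thesis
    unfolding gram_ry_qubit by (rule abs_cos_less_one)
qed

lemma psiR_eq_tensor_power_sum:
  "psiR R n = (\<lambda>x. of_real (norm_const R n * tensor_power_sum (ry_qubit R) R n x))"
  by (simp add: fun_eq_iff psiR_def psi_unnorm_eq_tensor_power_sum)

lemma norm_const_eq: "norm_const R n = 1 / sqrt (\<Sum>k<R. \<Sum>l<R. gram (ry_qubit R) k l ^ n)"
  by (simp add: norm_const_def psi_unnorm_eq_tensor_power_sum sum_sq_tensor_power_sum)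

lemma tendsto_sum_power_gram_ry_qubit:
  "(\<lambda>n. \<Sum>k<R. \<Sum>l<R. gram (ry_qubit R) k l ^ n) \<longlonglongrightarrow> real R"
  by (intro tendsto_sum_power_entries gram_ry_qubit_self abs_gram_ry_qubit_less_one)

lemma eventually_sum_power_gram_ry_qubit_pos:
  assumes "R > 0"
  shows "eventually (\<lambda>n. 0 < (\<Sum>k<R. \<Sum>l<R. gram (ry_qubit R) k l ^ n)) sequentially"
  using order_tendstoD(1)[OF tendsto_sum_power_gram_ry_qubit, of 0] assms by simp

lemma tendsto_conc_ent_psiR:
  assumes "R > 0"
  shows "((\<lambda>n. conc_ent n (psiR R n)) \<longlongrightarrow> (real R - 1) / real R) sequentially"
proof -
  define S where "S n = (\<Sum>k<R. \<Sum>l<R. gram (ry_qubit R) k l ^ n)" for n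
  define T where "T n = (\<Sum>k<R. \<Sum>k'<R. \<Sum>l<R. \<Sum>l'<R. ((gram (ry_qubit R) k l' * gram (ry_qubit R) l k' +
                      gram (ry_qubit R) k l * gram (ry_qubit R) k' l') / 2) ^ n)" for n
  have "eventually (\<lambda>n. 1 - T n / (S n)\<^sup>2 = conc_ent n (psiR R n)) sequentially"
    using eventually_sum_power_gram_ry_qubit_pos[OF assms]
  proof eventually_elim
    case (elim n)
    then have pos: "0 < S n" and c2: "(norm_const R n)\<^sup>2 * S n = 1"
      by (simp_all add: norm_const_eq S_def power_divide)
    have "norm_const R n ^ 4 * (S n)\<^sup>2 = ((norm_const R n)\<^sup>2 * S n)\<^sup>2"
      by (simp add: power_mult_distrib flip: power_mult)
    with pos c2 have c4: "norm_const R n ^ 4 = 1 / (S n)\<^sup>2"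
      by (simp add: eq_divide_eq)
    show ?case
      unfolding psiR_eq_tensor_power_sum conc_ent_tensor_power_sum[OF c2[unfolded S_def]] c4 T_def
      by simp
  qed
  moreover have "(\<lambda>n. 1 - T n / (S n)\<^sup>2) \<longlonglongrightarrow> 1 - real R / (real R)\<^sup>2"
    unfolding S_def T_def using assms
    by (intro tendsto_intros tendsto_sum_power_gram_ry_qubit tendsto_sum_power_mean_products
          gram_ry_qubit_self abs_gram_ry_qubit_less_one) simp_all
  moreover have "1 - real R / (real R)\<^sup>2 = (real R - 1) / real R"
    using assms by (simp add: field_simps power2_eq_square)
  ultimately show ?thesis
    by (metis Lim_transform_eventually)
qed

section \<open>CP rank\<close>

definition product_functional :: "nat \<Rightarrow> (nat \<Rightarrow> bool \<Rightarrow> complex) \<Rightarrow> qstate \<Rightarrow> complex" where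
  "product_functional n \<omega> \<psi> = (\<Sum>x\<in>Pow {..<n}. (\<Prod>j<n. \<omega> j (j \<in> x)) * \<psi> x)"

lemma product_functional_cp_sum:
  assumes "\<forall>x\<in>Pow {..<n}. \<psi> x = (\<Sum>i<r. c i * (\<Prod>j<n. \<phi> i j (j \<in> x)))"
  shows "product_functional n \<omega> \<psi> =
         (\<Sum>i<r. c i * (\<Prod>j<n. \<omega> j False * \<phi> i j False + \<omega> j True * \<phi> i j True))"
proof -
  have "product_functional n \<omega> \<psi> = (\<Sum>x\<in>Pow {..<n}. \<Sum>i<r. c i * (\<Prod>j<n. \<omega> j (j \<in> x) * \<phi> i j (j \<in> x)))"
    unfolding product_functional_def using assms
    by (intro sum.cong refl) (simp add: sum_distrib_left prod.distrib mult_ac)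
  also have "\<dots> = (\<Sum>i<r. c i * (\<Sum>x\<in>Pow {..<n}. \<Prod>j<n. \<omega> j (j \<in> x) * \<phi> i j (j \<in> x)))"
    by (simp add: sum.swap[of _ "Pow _"] sum_distrib_left)
  also have "\<dots> = (\<Sum>i<r. c i * (\<Prod>j<n. \<omega> j False * \<phi> i j False + \<omega> j True * \<phi> i j True))"
    using sum_Pow_prod_bool[of "{..<n}" "\<lambda>j \<beta>. \<omega> j \<beta> * \<phi> _ j \<beta>"] by simp
  finally show ?thesis .
qed

lemma cp_decomp_product_functional_split:
  assumes "has_cp_decomp n \<psi> r" and "m \<le> n"
  obtains F G :: "'s \<Rightarrow> nat \<Rightarrow> complex"
  where "\<And>s t. product_functional n (\<lambda>j. if j < m then \<alpha> s j else \<beta> t j) \<psi> = (\<Sum>i<r. F s i * G t i)"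
proof -
  obtain c \<phi> where dec: "\<forall>x\<in>Pow {..<n}. \<psi> x = (\<Sum>i<r. c i * (\<Prod>j<n. \<phi> i j (j \<in> x)))"
    using assms(1) unfolding has_cp_decomp_def by blast
  define pair where "pair \<omega> i j = \<omega> False * \<phi> i j False + \<omega> True * \<phi> i j True" for \<omega> i j
  have split: "(\<Prod>j<n. pair (if j < m then \<alpha> s j else \<beta> t j) i j) =
               (\<Prod>j<m. pair (\<alpha> s j) i j) * (\<Prod>j\<in>{m..<n}. pair (\<beta> t j) i j)" for s t i
  proof -
    have "prod f {..<n} = prod f {..<m} * prod f {m..<n}" for f :: "nat \<Rightarrow> complex"
      using assms(2) by (simp add: lessThan_atLeast0 prod.atLeastLessThan_concat)
    then show ?thesis
      by (simp only:) (intro arg_cong2[where f = "(*)"] prod.cong; simp)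
  qed
  show ?thesis
  proof
    fix s t
    show "product_functional n (\<lambda>j. if j < m then \<alpha> s j else \<beta> t j) \<psi> =
          (\<Sum>i<r. (c i * (\<Prod>j<m. pair (\<alpha> s j) i j)) * (\<Prod>j\<in>{m..<n}. pair (\<beta> t j) i j))"
      unfolding product_functional_cp_sum[OF dec] pair_def[symmetric] split by (simp add: mult_ac)
  qed
qed

lemma biorthogonal_family_card_le:
  fixes F G :: "nat \<Rightarrow> nat \<Rightarrow> 'a :: field"
  assumes "\<And>k l. k < R \<Longrightarrow> l < R \<Longrightarrow> (\<Sum>i<r. F k i * G l i) = of_bool (k = l)"
  shows "R \<le> r"
proof (rule ccontr)
  assume "\<not> R \<le> r"
  then have "r < R" by simp
  define A where "A = mat R R (\<lambda>(k, i). if i < r then F k i else 0)"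
  define B where "B = mat R R (\<lambda>(i, l). if i < r then G l i else 0)"
  have A: "A \<in> carrier_mat R R" and B: "B \<in> carrier_mat R R"
    by (auto simp: A_def B_def)
  have "A * B = 1\<^sub>m R"
  proof (rule eq_matI)
    fix k l assume kl: "k < dim_row (1\<^sub>m R)" "l < dim_col (1\<^sub>m R)"
    have "(A * B) $$ (k, l) = (\<Sum>i\<in>{0..<R}. if i < r then F k i * G l i else 0)"
      using kl A B by (auto simp: scalar_prod_def A_def B_def intro!: sum.cong)
    also have "\<dots> = (\<Sum>i\<in>{0..<R} \<inter> {i. i < r}. F k i * G l i)"
      by (simp add: sum.inter_restrict)
    also have "{0..<R} \<inter> {i. i < r} = {..<r}"
      using \<open>r < R\<close> by auto
    also have "(\<Sum>i<r. F k i * G l i) = 1\<^sub>m R $$ (k, l)"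
      using assms kl by simp
    finally show "(A * B) $$ (k, l) = 1\<^sub>m R $$ (k, l)" .
  qed (use A B in auto)
  moreover have "det B = 0"
  proof -
    have "B = mat\<^sub>r R R (\<lambda>i. if i = r then 0\<^sub>v R else row B i)"
      by (rule eq_matI) (auto simp: B_def)
    also have "det \<dots> = 0"
      by (rule det_row_0) (use \<open>r < R\<close> B in auto)
    finally show ?thesis .
  qed
  ultimately show False
    using det_mult[OF A B] by simp
qed

definition root_of_unity :: "nat \<Rightarrow> nat \<Rightarrow> complex" where
  "root_of_unity R k = cis (2 * pi * real k / real R)"

lemma root_of_unity_power_self:
  assumes "0 < R"
  shows "root_of_unity R k ^ R = 1"
proof -
  have "root_of_unity R k ^ R = cis (real R * (2 * pi * real k / real R))"
    unfolding root_of_unity_def by (rule Complex.DeMoivre)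
  also have "\<dots> = cis (2 * pi * real k)"
    using assms by simp
  finally show ?thesis
    by (simp add: cis_multiple_2pi)
qed

lemma sum_power_root_of_unity_orthogonal:
  assumes "k < R" and "l < R"
  shows "(\<Sum>s<R. (cnj (root_of_unity R k) * root_of_unity R l) ^ s) = of_bool (k = l) * of_nat R"
proof -
  define w where "w = cnj (root_of_unity R k) * root_of_unity R l"
  have unit: "root_of_unity R k * cnj (root_of_unity R k) = 1"
    by (simp add: root_of_unity_def cis_cnj cis_mult)
  show ?thesis
  proof (cases "k = l")
    case True
    then show ?thesis
      using unit by (simp add: mult.commute)
  next
    case False
    have "root_of_unity R k * w = root_of_unity R l"
      using unit by (simp add: w_def mult.assoc[symmetric])
    moreover have "inj_on (root_of_unity R) {..<R}"
      using bij_betw_imp_inj_on[OF Complex.bij_betw_roots_unity, of R] assms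
      by (simp add: root_of_unity_def[abs_def])
    then have "root_of_unity R k \<noteq> root_of_unity R l"
      using False assms by (auto dest: inj_onD)
    ultimately have "w \<noteq> 1"
      by auto
    moreover have "w ^ R = 1"
      using assms by (simp add: w_def power_mult_distrib root_of_unity_power_self flip: complex_cnj_power)
    ultimately show ?thesis
      using False by (simp add: w_def[symmetric] geometric_sum)
  qed
qed

lemma dft_hankel_root_of_unity:
  fixes d :: "nat \<Rightarrow> complex"
  assumes "k < R" and "l < R"
  shows "(\<Sum>s<R. \<Sum>t<R. cnj (root_of_unity R k) ^ s * cnj (root_of_unity R l) ^ t *
            (\<Sum>m<R. d m * root_of_unity R m ^ (s + t))) = of_bool (k = l) * (d k * of_nat R ^ 2)"
proof -
  have "(\<Sum>s<R. \<Sum>t<R. cnj (root_of_unity R k) ^ s * cnj (root_of_unity R l) ^ t *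
            (\<Sum>m<R. d m * root_of_unity R m ^ (s + t))) =
        (\<Sum>s<R. \<Sum>t<R. \<Sum>m<R. d m * ((cnj (root_of_unity R k) * root_of_unity R m) ^ s *
                                    (cnj (root_of_unity R l) * root_of_unity R m) ^ t))"
    by (simp add: sum_distrib_left power_add power_mult_distrib mult_ac)
  also have "\<dots> = (\<Sum>m<R. \<Sum>s<R. \<Sum>t<R. d m * ((cnj (root_of_unity R k) * root_of_unity R m) ^ s *
                                              (cnj (root_of_unity R l) * root_of_unity R m) ^ t))"
    by (rule trans[OF sum.cong[OF refl sum.swap] sum.swap])
  also have "\<dots> = (\<Sum>m<R. d m * ((\<Sum>s<R. (cnj (root_of_unity R k) * root_of_unity R m) ^ s) *
                              (\<Sum>t<R. (cnj (root_of_unity R l) * root_of_unity R m) ^ t)))"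
    unfolding sum_product by (simp only: sum_distrib_left)
  also have "\<dots> = (\<Sum>m<R. d m * ((of_bool (k = m) * of_nat R) * (of_bool (l = m) * of_nat R)))"
    using assms by (simp add: sum_power_root_of_unity_orthogonal)
  also have "\<dots> = (\<Sum>m<R. if m = k then of_bool (k = l) * (d k * of_nat R ^ 2) else 0)"
    by (intro sum.cong refl) (auto simp: power2_eq_square)
  also have "\<dots> = of_bool (k = l) * (d k * of_nat R ^ 2)"
    using assms by simp
  finally show ?thesis .
qed

lemma hankel_root_of_unity_rank_le:
  fixes d :: "nat \<Rightarrow> complex" and F G :: "nat \<Rightarrow> nat \<Rightarrow> complex"
  assumes d: "\<And>m. m < R \<Longrightarrow> d m \<noteq> 0"
    and factor: "\<And>s t. s < R \<Longrightarrow> t < R \<Longrightarrow>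
                   (\<Sum>m<R. d m * root_of_unity R m ^ (s + t)) = (\<Sum>i<r. F s i * G t i)"
  shows "R \<le> r"
proof -
  define u where "u k s = cnj (root_of_unity R k) ^ s" for k s
  define F' where "F' k i = (\<Sum>s<R. u k s * F s i) / (d k * of_nat R ^ 2)" for k i
  define G' where "G' l i = (\<Sum>t<R. u l t * G t i)" for l i
  have "(\<Sum>i<r. F' k i * G' l i) = of_bool (k = l)" if "k < R" "l < R" for k l
  proof -
    have "(\<Sum>i<r. (\<Sum>s<R. u k s * F s i) * (\<Sum>t<R. u l t * G t i)) =
          (\<Sum>i<r. \<Sum>s<R. \<Sum>t<R. u k s * u l t * (F s i * G t i))"
      by (simp add: sum_product mult_ac)
    also have "\<dots> = (\<Sum>s<R. \<Sum>t<R. \<Sum>i<r. u k s * u l t * (F s i * G t i))"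
      by (simp only: sum.swap[where A = "{..<r}"])
    also have "\<dots> = (\<Sum>s<R. \<Sum>t<R. u k s * u l t * (\<Sum>m<R. d m * root_of_unity R m ^ (s + t)))"
      by (simp add: factor flip: sum_distrib_left)
    also have "\<dots> = of_bool (k = l) * (d k * of_nat R ^ 2)"
      unfolding u_def using that by (rule dft_hankel_root_of_unity)
    finally show ?thesis
      using that d by (simp add: F'_def G'_def sum_divide_distrib[symmetric])
  qed
  then show ?thesis
    by (rule biorthogonal_family_card_le)
qed

definition phase_functional :: "bool \<Rightarrow> bool \<Rightarrow> complex" where
  "phase_functional p b = (if b then (if p then \<i> else - \<i>) else 1)"

lemma phase_functional_ry_qubit:
  "phase_functional p False * of_real (ry_qubit R k False) + phase_functional p True * of_real (ry_qubit R k True) =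
   cnj (cis (pi * real k / real R)) * (if p then root_of_unity R k else 1)"
  by (cases p) (simp_all add: phase_functional_def ry_qubit_def Ry0_def root_of_unity_def cis_cnj cis_mult complex_eq_iff)

lemma psiR_cp_sum:
  "psiR R n x = (\<Sum>k<R. of_real (norm_const R n) * (\<Prod>j<n. of_real (ry_qubit R k (j \<in> x))))"
  by (simp add: psiR_eq_tensor_power_sum tensor_power_sum_def sum_distrib_left)

lemma product_functional_psiR:
  "product_functional n (\<lambda>j. phase_functional (P j)) (psiR R n) =
   of_real (norm_const R n) *
     (\<Sum>k<R. cnj (cis (pi * real k / real R)) ^ n * root_of_unity R k ^ card {j. j < n \<and> P j})"
proof -
  have "(\<Prod>j<n. cnj (cis (pi * real k / real R)) * (if P j then root_of_unity R k else 1)) =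
        cnj (cis (pi * real k / real R)) ^ n * root_of_unity R k ^ card {j. j < n \<and> P j}" for k
    by (simp add: prod.distrib prod.If_cases Int_def lessThan_def conj_commute)
  moreover have "product_functional n \<omega> (psiR R n) = (\<Sum>k<R. of_real (norm_const R n) *
      (\<Prod>j<n. \<omega> j False * of_real (ry_qubit R k False) + \<omega> j True * of_real (ry_qubit R k True)))" for \<omega>
    by (rule product_functional_cp_sum) (simp add: psiR_cp_sum)
  ultimately show ?thesis
    by (simp add: phase_functional_ry_qubit sum_distrib_left)
qed

lemma has_cp_decomp_psiR: "has_cp_decomp n (psiR R n) R"
  unfolding has_cp_decomp_def
  by (intro exI[of _ "\<lambda>_. of_real (norm_const R n)"] exI[of _ "\<lambda>k j b. of_real (ry_qubit R k b)"] ballI)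
     (rule psiR_cp_sum)

lemma has_cp_decomp_psiR_imp_le:
  assumes "0 < R" and "2 * R \<le> n" and "norm_const R n \<noteq> 0" and "has_cp_decomp n (psiR R n) r"
  shows "R \<le> r"
proof -
  define P where "P s t j = (if j < R then j < s else j < R + t)" for s t j
  obtain F G :: "nat \<Rightarrow> nat \<Rightarrow> complex" where FG:
    "\<And>s t. product_functional n (\<lambda>j. if j < R then phase_functional (j < s) else phase_functional (j < R + t))
             (psiR R n) = (\<Sum>i<r. F s i * G t i)"
    using cp_decomp_product_functional_split[OF assms(4), where m = R
            and \<alpha> = "\<lambda>s j. phase_functional (j < s)" and \<beta> = "\<lambda>t j. phase_functional (j < R + t)"] assms(2)
    by fastforce
  have "card {j. j < n \<and> P s t j} = s + t" if "s < R" "t < R" for s t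
  proof -
    have "{j. j < n \<and> P s t j} = {..<s} \<union> {R..<R + t}"
      using that assms(2) by (auto simp: P_def)
    moreover have "card ({..<s} \<union> {R..<R + t}) = s + t"
      using that by (subst card_Un_disjoint) auto
    ultimately show ?thesis
      by simp
  qed
  then have "(\<Sum>m<R. (of_real (norm_const R n) * cnj (cis (pi * real m / real R)) ^ n) * root_of_unity R m ^ (s + t)) =
             (\<Sum>i<r. F s i * G t i)" if "s < R" "t < R" for s t
    using FG[of s t] product_functional_psiR[of n "P s t" R] that
    by (simp add: P_def if_distrib[of phase_functional] sum_distrib_left mult.assoc)
  moreover have "of_real (norm_const R n) * cnj (cis (pi * real m / real R)) ^ n \<noteq> 0" for m
    using assms(3) by (simp add: cis_cnj)
  ultimately show ?thesis
    by (intro hankel_root_of_unity_rank_le)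
qed

theorem mainTheorem7:
  fixes R :: nat
  assumes "R \<ge> 2"
  shows "((\<lambda>n. conc_ent n (psiR R n)) \<longlongrightarrow> (real R - 1) / real R) sequentially
         \<and> (\<exists>n0. \<forall>n\<ge>n0. cp_rank n (psiR R n) = R)"
proof
  have "R > 0" using assms by simp
  then show "((\<lambda>n. conc_ent n (psiR R n)) \<longlongrightarrow> (real R - 1) / real R) sequentially"
    by (rule tendsto_conc_ent_psiR)
  obtain N where N: "norm_const R n \<noteq> 0" if "N \<le> n" for n
    using eventually_sum_power_gram_ry_qubit_pos[OF \<open>R > 0\<close>]
    unfolding eventually_sequentially norm_const_eq by fastforce
  have "cp_rank n (psiR R n) = R" if "max N (2 * R) \<le> n" for n
    unfolding cp_rank_def
    using has_cp_decomp_psiR has_cp_decomp_psiR_imp_le[OF \<open>R > 0\<close> _ N] that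
    by (intro Least_equality) auto
  then show "\<exists>n0. \<forall>n\<ge>n0. cp_rank n (psiR R n) = R"
    by blast
qed

end
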